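(* Consider the discrete-time nonlinear system $x^+=AM(x)+Bu$ with (unknown) $A\in\mathbb{R}^{n\times N}$, $B\in\mathbb{R}^{n\times m}$, $M(x)=\begin{bmatrix}x\\ \mathcal{Z}(x)\end{bmatrix}\in\mathbb{R}^N$, $\mathcal{Z}:\mathbb{R}^n\to\mathbb{R}^{N-n}$, state set $X\subset\mathbb{R}^n$, initial set $X_{\mathcal I}\subset X$, unsafe set $X_{\mathcal U}\subset X$. Let $\mathcal{U}_0=[u(0),\dots,u(T-1)]$, $\mathcal{X}_1=[x(1),\dots,x(T)]$ and $\mathcal{M}_0=[M(x(0)),\dots,M(x(T-1))]\in\mathbb{R}^{N\times T}$ be built from a single trajectory $x(t+1)=AM(x(t))+Bu(t)$. Let $Q=[Q_1~Q_2]$ with $Q_1\in\mathbb{R}^{T\times n}$, $Q_2\in\mathbb{R}^{T\times(N-n)}$ and suppose $\mathcal{X}_1Q_2=\mathbf{0}_{n\times(N-n)}$. Suppose there exist a symmetric positive-definite $P\in\mathbb{R}^{n\times n}$ and $H\in\mathbb{R}^{T\times n}$ with $Q_1=HP$, and constants $\gamma,\lambda\in\mathbb{R}_{\ge0}$ with $\lambda>\gamma$, such that (i) $\mathcal{M}_0Q_2=\begin{bmatrix}\mathbf{0}_{n\times(N-n)}\\ \mathbb{I}_{N-n}\end{bmatrix}$; (ii) $\mathcal{M}_0H=\begin{bmatrix}P^{-1}\\ \mathbf{0}_{(N-n)\times n}\end{bmatrix}$; (iii) $x^\top Px\le\gamma$ for all $x\in X_{\mathcal I}$; (iv) $x^\top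 Px\ge\lambda$ for all $x\in X_{\mathcal U}$; (v) $\begin{bmatrix}P^{-1} & \mathcal{X}_1H\\ H^\top\mathcal{X}_1^\top & P^{-1}\end{bmatrix}\succeq0$. Then $\mathcal{B}(x)=x^\top Px$ is a (conventional, $k=1$) control barrier certificate and $u=\mathcal{U}_0QM(x)$ is a corresponding safety controller; that is, $\mathcal{B}\le\gamma$ on $X_{\mathcal I}$, $\mathcal{B}\ge\lambda$ on $X_{\mathcal U}$, and for all $x\in X$, with $x^+=AM(x)+B\,\mathcal{U}_0QM(x)$, $\mathcal{B}(x^+)\le\mathcal{B}(x)$.
   Context: $\mathbb{I}_{N-n}$ denotes the identity and $\mathbf{0}$ zero matrices of the indicated sizes; $\succeq0$ means positive semidefinite. A control barrier certificate (CBC) is a function $\mathcal{B}:X\to\mathbb{R}_{\ge0}$ with $\gamma,\lambda\ge0$, $\lambda>\gamma$, such that $\mathcal{B}\le\gamma$ on $X_{\mathcal I}$, $\mathcal{B}\ge\lambda$ on $X_{\mathcal U}$, and for all $x\in X$ there is an input with $\mathcal{B}(x^+)\le\mathcal{B}(x)$; a feedback realizing this is a safety controller. *)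

theory Defs
  imports "HOL-Analysis.Analysis"
begin

text \<open>Lifting map M(x) = [x; Z(x)] in R^N, indexed by the sum type 'n + 'k (N = n + (N-n)).\<close>
definition liftM :: "(real^'n \<Rightarrow> real^'k) \<Rightarrow> real^'n \<Rightarrow> real^('n + 'k)" where
  "liftM Z x = (\<chi> r. case r of Inl i \<Rightarrow> x $ i | Inr j \<Rightarrow> Z x $ j)"

definition sym_pos_def :: "real^'n^'n \<Rightarrow> bool" where
  "sym_pos_def P \<longleftrightarrow> transpose P = P \<and> (\<forall>x. x \<noteq> 0 \<longrightarrow> 0 < x \<bullet> (P *v x))"

definition psd :: "real^'n^'n \<Rightarrow> bool" where
  "psd K \<longleftrightarrow> transpose K = K \<and> (\<forall>v. 0 \<le> v \<bullet> (K *v v))"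

definition block2 :: "real^'b^'a \<Rightarrow> real^'d^'a \<Rightarrow> real^'b^'c \<Rightarrow> real^'d^'c \<Rightarrow> real^('b+'d)^('a+'c)" where
  "block2 K11 K12 K21 K22 = (\<chi> r c. case r of
      Inl i \<Rightarrow> (case c of Inl j \<Rightarrow> K11 $ i $ j | Inr j \<Rightarrow> K12 $ i $ j)
    | Inr i \<Rightarrow> (case c of Inl j \<Rightarrow> K21 $ i $ j | Inr j \<Rightarrow> K22 $ i $ j))"

definition cbc_with_controller ::
  "'x set \<Rightarrow> 'x set \<Rightarrow> 'x set \<Rightarrow> ('x \<Rightarrow> 'u \<Rightarrow> 'x) \<Rightarrow> ('x \<Rightarrow> real) \<Rightarrow> real \<Rightarrow> real \<Rightarrow> ('x \<Rightarrow> 'u) \<Rightarrow> bool" where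
  "cbc_with_controller X XI XU f Bc gam lam ctrl \<longleftrightarrow>
     (\<forall>x\<in>X. 0 \<le> Bc x) \<and> 0 \<le> gam \<and> 0 \<le> lam \<and> gam < lam \<and>
     (\<forall>x\<in>XI. Bc x \<le> gam) \<and> (\<forall>x\<in>XU. lam \<le> Bc x) \<and>
     (\<forall>x\<in>X. Bc (f x (ctrl x)) \<le> Bc x)"

end

theory Submission imports Defs begin

text \<open>
  Since \<open>\<M>\<^sub>0 Q\<close> is the identity on lifted states (conditions (i) and (ii)), every closed-loop
  step can be read off the data: \<open>A M(x) + B \<U>\<^sub>0 Q M(x) = \<X>\<^sub>1 Q M(x) = \<X>\<^sub>1 H P x\<close>, using
  \<open>\<X>\<^sub>1 = A \<M>\<^sub>0 + B \<U>\<^sub>0\<close> and \<open>\<X>\<^sub>1 Q\<^sub>2 = 0\<close>. Testing the positive semidefinite block matrix (v) with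
  the vector \<open>(-P G z, z)\<close>, \<open>G = \<X>\<^sub>1 H\<close>, gives \<open>(G z)\<^sup>T P (G z) \<le> z\<^sup>T P\<^sup>-\<^sup>1 z\<close>; for \<open>z = P x\<close>
  this is the decrease \<open>\<B>(x\<^sup>+) \<le> \<B>(x)\<close>.
\<close>

definition vec_join :: "'a^'m \<Rightarrow> 'a^'n \<Rightarrow> 'a^('m + 'n)" where
  "vec_join a b = (\<chi> r. case r of Inl i \<Rightarrow> a $ i | Inr j \<Rightarrow> b $ j)"

lemma vec_join_nth [simp]:
  "vec_join a b $ Inl i = a $ i"
  "vec_join a b $ Inr j = b $ j"
  by (simp_all add: vec_join_def)

lemma vec_join_add: "vec_join a b + vec_join c d = vec_join (a + c) (b + d)"
  by (simp add: vec_eq_iff vec_join_def split: sum.split)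

lemma liftM_eq_vec_join: "liftM Z x = vec_join x (Z x)"
  by (simp add: liftM_def vec_join_def)

lemma sum_UNIV_Plus:
  "sum f (UNIV :: ('a::finite + 'b::finite) set) = (\<Sum>i\<in>UNIV. f (Inl i)) + (\<Sum>j\<in>UNIV. f (Inr j))"
  by (subst UNIV_Plus_UNIV[symmetric], subst sum.Plus) (auto simp: o_def)

lemma inner_vec_join [simp]:
  fixes a c :: "'a::real_inner^'m::finite" and b d :: "'a^'n::finite"
  shows "vec_join a b \<bullet> vec_join c d = a \<bullet> c + b \<bullet> d"
  by (simp add: inner_vec_def sum_UNIV_Plus)

lemma matrix_vector_mult_vec_join_rows:
  fixes K :: "'a::semiring_1^'c^'m" and L :: "'a^'c^'n"
  shows "vec_join K L *v v = vec_join (K *v v) (L *v v)"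
  by (simp add: vec_eq_iff vec_join_def matrix_vector_mult_def split: sum.split)

lemma matrix_vector_mult_vec_join_cols:
  fixes K :: "'a::semiring_1^'m::finite^'r" and L :: "'a^'n::finite^'r"
  shows "(\<chi> s. vec_join (K $ s) (L $ s)) *v vec_join a b = K *v a + L *v b"
  by (simp add: vec_eq_iff matrix_vector_mult_def sum_UNIV_Plus)

lemma block2_mult_vec_join:
  "block2 K11 K12 K21 K22 *v vec_join c d = vec_join (K11 *v c + K12 *v d) (K21 *v c + K22 *v d)"
  unfolding vec_eq_iff
proof
  fix r
  show "(block2 K11 K12 K21 K22 *v vec_join c d) $ r
    = vec_join (K11 *v c + K12 *v d) (K21 *v c + K22 *v d) $ r"
    by (cases r) (simp_all add: block2_def matrix_vector_mult_def sum_UNIV_Plus)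
qed

lemma invertible_if_sym_pos_def:
  fixes P :: "real^'n^'n"
  assumes "sym_pos_def P"
  shows "invertible P"
proof -
  have "inj ((*v) P)"
  proof (rule injI)
    fix a b assume "P *v a = P *v b"
    then have "(a - b) \<bullet> (P *v (a - b)) = 0"
      by (simp add: matrix_vector_mult_diff_distrib)
    then show "a = b"
      using assms unfolding sym_pos_def_def by (metis less_irrefl right_minus_eq)
  qed
  then show ?thesis
    using matrix_left_invertible_injective invertible_left_inverse by blast
qed

lemma matrix_inv_left:
  fixes A :: "'a::field^'n^'n"
  assumes "invertible A"
  shows "matrix_inv A ** A = mat 1"
proof -
  have "\<exists>A'. A ** A' = mat 1 \<and> A' ** A = mat 1"
    using assms unfolding invertible_def .
  then have "A ** matrix_inv A = mat 1 \<and> matrix_inv A ** A = mat 1"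
    unfolding matrix_inv_def by (rule someI_ex)
  then show ?thesis ..
qed

lemma quadratic_form_contraction_if_block_psd:
  fixes P Pinv :: "real^'a^'a" and G :: "real^'b^'a" and R :: "real^'b^'b"
  assumes Pinv_P: "Pinv ** P = mat 1"
    and psd: "psd (block2 Pinv G (transpose G) R)"
  shows "(G *v z) \<bullet> (P *v (G *v z)) \<le> z \<bullet> (R *v z)"
proof -
  define w where "w = G *v z"
  define a where "a = - (P *v w)"
  have "Pinv *v a = - w"
    by (simp add: a_def vec.neg matrix_vector_mul_assoc Pinv_P)
  then have "a \<bullet> (Pinv *v a) = w \<bullet> (P *v w)"
    by (simp add: a_def inner_commute)
  moreover have "z \<bullet> (transpose G *v a) = a \<bullet> w"
    unfolding w_def transpose_matrix_vector by (metis dot_lmul_matrix inner_commute)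
  moreover have "a \<bullet> w = - (w \<bullet> (P *v w))"
    by (simp add: a_def inner_commute)
  moreover have "0 \<le> vec_join a z \<bullet> (block2 Pinv G (transpose G) R *v vec_join a z)"
    using psd unfolding psd_def by blast
  ultimately show ?thesis
    by (simp add: block2_mult_vec_join inner_add_right w_def)
qed

lemma matrix_of_columns_mult_add:
  fixes A :: "'a::semiring_1^'N^'n" and B :: "'a^'m^'n"
  assumes "\<And>s. y s = A *v m s + B *v v s"
  shows "(\<chi> i s. y s $ i) = A ** (\<chi> r s. m s $ r) + B ** (\<chi> i s. v s $ i)"
  by (simp add: vec_eq_iff matrix_matrix_mult_def matrix_vector_mult_def assms)

lemma data_right_inverse:
  fixes M0 :: "real^'T^('n::finite + 'k::finite)" and H :: "real^'n^'T" and Q2 :: "real^'k^'T"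
  assumes "Pinv ** P = mat 1"
    and "M0 ** Q2 = vec_join 0 (mat 1)"
    and "M0 ** H = vec_join Pinv 0"
  shows "M0 *v ((\<chi> s. vec_join ((H ** P) $ s) (Q2 $ s)) *v vec_join y w) = vec_join y w"
proof -
  have "M0 *v ((H ** P) *v y) = (M0 ** H) *v (P *v y)"
    by (simp add: matrix_vector_mul_assoc matrix_mul_assoc)
  also have "\<dots> = vec_join (Pinv *v (P *v y)) 0"
    by (simp add: assms(3) matrix_vector_mult_vec_join_rows)
  also have "\<dots> = vec_join y 0"
    by (simp add: matrix_vector_mul_assoc assms(1))
  finally have "M0 *v ((H ** P) *v y) = vec_join y 0" .
  moreover have "M0 *v (Q2 *v w) = vec_join 0 w"
    by (simp add: matrix_vector_mul_assoc assms matrix_vector_mult_vec_join_rows)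
  ultimately show ?thesis
    by (simp add: matrix_vector_mult_vec_join_cols matrix_vector_right_distrib vec_join_add)
qed

lemma closed_loop_eq_data:
  assumes "X1 = A ** M0 + B ** U0" and "M0 *v (Q *v m) = m"
  shows "A *v m + B *v (U0 ** Q *v m) = X1 *v (Q *v m)"
  using assms by (simp add: matrix_vector_mult_add_rdistrib matrix_vector_mul_assoc[symmetric])

theorem corollary1:
  fixes A :: "real^('n::finite + 'k::finite)^'n" and B :: "real^('m::finite)^'n"
    and Z :: "real^'n \<Rightarrow> real^'k"
    and X XI XU :: "(real^'n) set"
    and x :: "nat \<Rightarrow> real^'n" and u :: "nat \<Rightarrow> real^'m"
    and \<tau> :: "'T::finite \<Rightarrow> nat"
    and U0 :: "real^'T^'m" and X1 :: "real^'T^'n" and M0 :: "real^'T^('n + 'k)"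
    and Q :: "real^('n + 'k)^'T" and Q1 :: "real^'n^'T" and Q2 :: "real^'k^'T"
    and P :: "real^'n^'n" and H :: "real^'n^'T"
    and gam lam :: real
  assumes XI: "XI \<subseteq> X" and XU: "XU \<subseteq> X"
    and tau: "bij_betw \<tau> UNIV {..<CARD('T)}"
    and traj: "\<And>t. t < CARD('T) \<Longrightarrow> x (Suc t) = A *v liftM Z (x t) + B *v u t"
    and U0_def: "U0 = (\<chi> i s. u (\<tau> s) $ i)"
    and X1_def: "X1 = (\<chi> i s. x (Suc (\<tau> s)) $ i)"
    and M0_def: "M0 = (\<chi> r s. liftM Z (x (\<tau> s)) $ r)"
    and Q_def: "Q = (\<chi> s c. case c of Inl j \<Rightarrow> Q1 $ s $ j | Inr j \<Rightarrow> Q2 $ s $ j)"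
    and X1Q2: "X1 ** Q2 = 0"
    and P_pd: "sym_pos_def P"
    and Q1_HP: "Q1 = H ** P"
    and gl: "0 \<le> gam" "0 \<le> lam" "gam < lam"
    and c1: "M0 ** Q2 = (\<chi> r c. case r of Inl i \<Rightarrow> 0 | Inr i \<Rightarrow> (if i = c then 1 else 0))"
    and c2: "M0 ** H = (\<chi> r c. case r of Inl i \<Rightarrow> matrix_inv P $ i $ c | Inr i \<Rightarrow> 0)"
    and c3: "\<forall>y\<in>XI. y \<bullet> (P *v y) \<le> gam"
    and c4: "\<forall>y\<in>XU. lam \<le> y \<bullet> (P *v y)"
    and c5: "psd (block2 (matrix_inv P) (X1 ** H) (transpose (X1 ** H)) (matrix_inv P))"
  shows "cbc_with_controller X XI XU (\<lambda>y v. A *v liftM Z y + B *v v)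
           (\<lambda>y. y \<bullet> (P *v y)) gam lam (\<lambda>y. U0 ** Q *v liftM Z y)"
proof -
  have Pinv_P: "matrix_inv P ** P = mat 1"
    using matrix_inv_left invertible_if_sym_pos_def P_pd by blast
  have B_nonneg: "0 \<le> y \<bullet> (P *v y)" for y
    using P_pd unfolding sym_pos_def_def by (cases "y = 0") (auto intro: less_imp_le)
  have X1_eq: "X1 = A ** M0 + B ** U0"
    unfolding X1_def M0_def U0_def
    by (rule matrix_of_columns_mult_add) (use tau traj in \<open>auto simp: bij_betw_def\<close>)
  have Q_eq: "Q = (\<chi> s. vec_join ((H ** P) $ s) (Q2 $ s))"
    by (simp add: Q_def Q1_HP vec_eq_iff vec_join_def)
  have lifted: "M0 *v (Q *v liftM Z y) = liftM Z y" for y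
    unfolding Q_eq liftM_eq_vec_join
    by (rule data_right_inverse[OF Pinv_P])
      (use c1 c2 in \<open>simp_all add: vec_eq_iff vec_join_def mat_def split: sum.split\<close>)
  have step: "A *v liftM Z y + B *v (U0 ** Q *v liftM Z y) = (X1 ** H) *v (P *v y)" for y
  proof -
    have "A *v liftM Z y + B *v (U0 ** Q *v liftM Z y) = X1 *v (Q *v liftM Z y)"
      using closed_loop_eq_data[OF X1_eq lifted] .
    also have "\<dots> = X1 *v ((H ** P) *v y) + (X1 ** Q2) *v Z y"
      by (simp add: Q_eq liftM_eq_vec_join matrix_vector_mult_vec_join_cols
          matrix_vector_right_distrib matrix_vector_mul_assoc)
    also have "\<dots> = (X1 ** H) *v (P *v y)"
      by (simp add: X1Q2 matrix_vector_mul_assoc matrix_mul_assoc)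
    finally show ?thesis .
  qed
  have decrease: "((X1 ** H) *v (P *v y)) \<bullet> (P *v ((X1 ** H) *v (P *v y))) \<le> y \<bullet> (P *v y)" for y
    using quadratic_form_contraction_if_block_psd[OF Pinv_P c5, of "P *v y"]
    by (simp add: matrix_vector_mul_assoc Pinv_P inner_commute)
  show ?thesis
    unfolding cbc_with_controller_def using gl c3 c4 B_nonneg decrease step by simp
qed

end
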